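(* Let $\sum_{n=1}^{\infty}x_n$ be an absolutely convergent real series whose associated function $f(\chi_A)=\sum_{n\in A}x_n$ is injective on $W=\{\chi_A\in\{0,1\}^{\mathbb{N}} : A \text{ is infinite and } \mathbb{N}\setminus A\text{ is infinite}\}$. Then for all ideals $I,J$ on $\mathbb{N}$ containing $\mathrm{Fin}$ we have $A_{I\cap J}(x_n)=A_I(x_n)\cap A_J(x_n)$.
   Context: An ideal on $\mathbb{N}$ is a family $I\subseteq P(\mathbb{N})$ closed under finite unions and subsets with $\mathbb{N}\notin I$; $\mathrm{Fin}$ is the ideal of finite sets. Subsets of $\mathbb{N}$ are identified with characteristic functions in $\{0,1\}^{\mathbb{N}}$. $A_I(x_n)=\{\sum_{n\in A}x_n : A\in I\}$. *)

theory Defs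
  imports "HOL-Analysis.Analysis"
begin

definition is_ideal :: "nat set set \<Rightarrow> bool" where
  "is_ideal I \<longleftrightarrow>
     (\<forall>A\<in>I. \<forall>B\<in>I. A \<union> B \<in> I) \<and>
     (\<forall>A\<in>I. \<forall>B. B \<subseteq> A \<longrightarrow> B \<in> I) \<and>
     UNIV \<notin> I"

definition Fin :: "nat set set" where
  "Fin = {A. finite A}"

definition subsum :: "(nat \<Rightarrow> real) \<Rightarrow> nat set \<Rightarrow> real" where
  "subsum x A = (\<Sum>n. if n \<in> A then x n else 0)"

definition W_sets :: "nat set set" where
  "W_sets = {A. infinite A \<and> infinite (UNIV - A)}"

definition achievement :: "nat set set \<Rightarrow> (nat \<Rightarrow> real) \<Rightarrow> real set" where
  "achievement I x = subsum x ` I"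

end

theory Submission
  imports Defs
begin

text \<open>A sum achieved by both ideals is achieved by some set A in I and some set B in J.
If A or B is finite, it lies in both ideals, since both contain Fin. Otherwise A and B are
infinite, and they are co-infinite because a set in a proper ideal containing Fin cannot
have finite complement; so both lie in W, and injectivity of the subseries sum on W forces
A = B.\<close>

lemma finite_mem_ideal: "Fin \<subseteq> I \<Longrightarrow> finite A \<Longrightarrow> A \<in> I"
  by (auto simp: Fin_def)

lemma ideal_mem_infinite_complement:
  assumes "is_ideal I" "Fin \<subseteq> I" "A \<in> I"
  shows "infinite (UNIV - A)"
proof
  assume "finite (UNIV - A)"
  with assms(2) have "UNIV - A \<in> I" by (rule finite_mem_ideal)
  then have "A \<union> (UNIV - A) \<in> I" using assms(1,3) unfolding is_ideal_def by blast
  then show False using assms(1) unfolding is_ideal_def by simp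
qed

lemma infinite_ideal_mem_W_sets:
  assumes "is_ideal I" "Fin \<subseteq> I" "A \<in> I" "infinite A"
  shows "A \<in> W_sets"
  using assms ideal_mem_infinite_complement by (simp add: W_sets_def)

lemma achievement_Int_subset: "achievement (I \<inter> J) x \<subseteq> achievement I x \<inter> achievement J x"
  by (auto simp: achievement_def)

lemma common_subsum_mem_achievement_Int:
  assumes inj: "inj_on (subsum x) W_sets"
    and I: "is_ideal I" "Fin \<subseteq> I" and J: "is_ideal J" "Fin \<subseteq> J"
    and A: "A \<in> I" and B: "B \<in> J" and eq: "subsum x A = subsum x B"
  shows "subsum x A \<in> achievement (I \<inter> J) x"
proof -
  consider "finite A" | "finite B" | "infinite A" "infinite B" by blast
  then obtain C where "C \<in> I \<inter> J" "subsum x C = subsum x A"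
  proof cases
    case 1
    with A finite_mem_ideal[OF J(2)] have "A \<in> I \<inter> J" by blast
    then show ?thesis using that by blast
  next
    case 2
    with B finite_mem_ideal[OF I(2)] have "B \<in> I \<inter> J" by blast
    then show ?thesis using that eq by simp
  next
    case 3
    then have "A \<in> W_sets" "B \<in> W_sets"
      using infinite_ideal_mem_W_sets[OF I A] infinite_ideal_mem_W_sets[OF J B] by auto
    with inj eq have "A = B" by (auto dest: inj_onD)
    then show ?thesis using that A B by simp
  qed
  then show ?thesis unfolding achievement_def by (metis image_eqI)
qed

theorem mainTheorem19:
  fixes x :: "nat \<Rightarrow> real" and I J :: "nat set set"
  assumes "summable (\<lambda>n. \<bar>x n\<bar>)"
    and "inj_on (subsum x) W_sets"
    and "is_ideal I" and "Fin \<subseteq> I"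
    and "is_ideal J" and "Fin \<subseteq> J"
  shows "achievement (I \<inter> J) x = achievement I x \<inter> achievement J x"
proof
  show "achievement I x \<inter> achievement J x \<subseteq> achievement (I \<inter> J) x"
  proof
    fix s assume "s \<in> achievement I x \<inter> achievement J x"
    then obtain A B where "A \<in> I" "B \<in> J" "s = subsum x A" "s = subsum x B"
      by (auto simp: achievement_def)
    with common_subsum_mem_achievement_Int[OF assms(2-6)]
    show "s \<in> achievement (I \<inter> J) x" by metis
  qed
qed (rule achievement_Int_subset)

end
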